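(* Let $n\geq 2$. The automorphism group $\mathrm{Aut}(\mathbf{D}_{n,<_1,\ldots,<_n})$, with the topology of pointwise convergence, is extremely amenable.
   Context: Fix $n\geq 2$ and a set $D_n\subseteq\mathbb{Q}^n$ which is dense in $\mathbb{Q}^n$ (product topology) and such that no two distinct points of $D_n$ share a common coordinate. $\mathbf{D}_{n,<_1,\ldots,<_n}=(D_n,<,<_1,\ldots,<_n)$ where $<$ is the product order ($\mathbf{a}<\mathbf{b}$ iff $a_i\leq b_i$ for all $i$ and $\mathbf{a}\neq\mathbf{b}$) and $\mathbf{a}<_i\mathbf{b}$ iff $a_i<b_i$. Automorphisms are bijections of $D_n$ preserving and reflecting all of $<,<_1,\ldots,<_n$. A topological group is extremely amenable if every continuous action of it on a compact Hausdorff space has a fixed point. *)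

theory Defs
  imports "HOL-Analysis.Analysis"
begin

text \<open>Points of Q^n are functions from a finite index type 'n to rat (n = CARD('n)).\<close>

text \<open>Density in Q^n with the product topology: every nonempty basic open box
  (product of open rational intervals) meets D.\<close>
definition dense_Qn :: "('n \<Rightarrow> rat) set \<Rightarrow> bool" where
  "dense_Qn D \<longleftrightarrow> (\<forall>a b. (\<forall>i. a i < b i) \<longrightarrow> (\<exists>d\<in>D. \<forall>i. a i < d i \<and> d i < b i))"

definition no_common_coord :: "('n \<Rightarrow> rat) set \<Rightarrow> bool" where
  "no_common_coord D \<longleftrightarrow> (\<forall>a\<in>D. \<forall>b\<in>D. a \<noteq> b \<longrightarrow> (\<forall>i. a i \<noteq> b i))"

definition prod_less :: "('n \<Rightarrow> rat) \<Rightarrow> ('n \<Rightarrow> rat) \<Rightarrow> bool" where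
  "prod_less a b \<longleftrightarrow> (\<forall>i. a i \<le> b i) \<and> a \<noteq> b"

text \<open>Automorphisms of (D, <, <_1, ..., <_n), as functions restricted to D.\<close>
definition Aut :: "('n \<Rightarrow> rat) set \<Rightarrow> (('n \<Rightarrow> rat) \<Rightarrow> ('n \<Rightarrow> rat)) set" where
  "Aut D = {f \<in> extensional D. bij_betw f D D \<and>
     (\<forall>a\<in>D. \<forall>b\<in>D. (prod_less (f a) (f b) \<longleftrightarrow> prod_less a b) \<and>
                   (\<forall>i. f a i < f b i \<longleftrightarrow> a i < b i))}"

text \<open>Topology of pointwise convergence: subspace of the product D^D of discrete spaces.\<close>
definition aut_topology :: "('n \<Rightarrow> rat) set \<Rightarrow> (('n \<Rightarrow> rat) \<Rightarrow> ('n \<Rightarrow> rat)) topology" where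
  "aut_topology D = subtopology (product_topology (\<lambda>_. discrete_topology D) D) (Aut D)"

text \<open>A continuous action of Aut(D) (group law: composition, identity: id on D) on X.\<close>
definition continuous_aut_action ::
  "('n \<Rightarrow> rat) set \<Rightarrow> 'b topology \<Rightarrow> ((('n \<Rightarrow> rat) \<Rightarrow> ('n \<Rightarrow> rat)) \<Rightarrow> 'b \<Rightarrow> 'b) \<Rightarrow> bool" where
  "continuous_aut_action D X act \<longleftrightarrow>
     continuous_map (prod_topology (aut_topology D) X) X (\<lambda>(g, x). act g x) \<and>
     (\<forall>x\<in>topspace X. act (restrict id D) x = x) \<and>
     (\<forall>g\<in>Aut D. \<forall>h\<in>Aut D. \<forall>x\<in>topspace X. act (compose D g h) x = act g (act h x))"

end

(*
  The proof follows the Kechris-Pestov-Todorcevic correspondence, carried out directly on the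
  action.

  Homogeneity: a finite partial map on D that preserves every coordinate order extends to an
  automorphism, by a back-and-forth argument; density of D supplies the one-point extensions, and
  since no two points share a coordinate, these orders are strict on D.

  Ramsey property: for finite A <= B <= D and a finite colouring of maps defined on A, some
  coordinatewise embedding phi of B into D gives the same colour to phi o e for every embedding e
  of A into B.  Ordering the pairs (i, x) lexicographically by coordinate and by x i codes a finite
  configuration as a finite set of naturals; the infinite Ramsey theorem yields a homogeneous
  set, and points of D close to integer vectors realise the codes.

  Given a continuous action on a compact space and a finite open cover, continuity and
  compactness give a finite A whose pointwise stabiliser keeps every point inside a single
  member of the cover.  Colour the embeddings of A by these members; the Ramsey property and
  homogeneity then give, for every finite set of automorphisms, a point that lies in one
  member together with all its images.  In a compact Hausdorff space this forces a common fixed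
  point.

  Nothing depends on the dimension.
*)
theory Submission
  imports Defs "HOL-Library.Ramsey"
begin

section \<open>Automorphisms and coordinatewise embeddings\<close>

definition coord_embedding ::
  "('n \<Rightarrow> 'a::ord) set \<Rightarrow> ('n \<Rightarrow> 'a) set \<Rightarrow> (('n \<Rightarrow> 'a) \<Rightarrow> ('n \<Rightarrow> 'a)) \<Rightarrow> bool" where
  "coord_embedding A B e \<longleftrightarrow> e ` A \<subseteq> B \<and> (\<forall>x\<in>A. \<forall>y\<in>A. \<forall>i. e x i < e y i \<longleftrightarrow> x i < y i)"

lemma coord_embedding_le_iff:
  fixes e :: "('n \<Rightarrow> 'a::linorder) \<Rightarrow> ('n \<Rightarrow> 'a)"
  assumes "coord_embedding A B e" "x \<in> A" "y \<in> A"
  shows "e x i \<le> e y i \<longleftrightarrow> x i \<le> y i"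
  using assms unfolding coord_embedding_def by (meson not_less)

lemma coord_embedding_inj_on:
  fixes e :: "('n \<Rightarrow> 'a::linorder) \<Rightarrow> ('n \<Rightarrow> 'a)"
  assumes "coord_embedding A B e"
  shows "inj_on e A"
proof (rule inj_onI)
  fix x y assume "x \<in> A" "y \<in> A" "e x = e y"
  then have "x i = y i" for i
    using coord_embedding_le_iff[OF assms, of x y i] coord_embedding_le_iff[OF assms, of y x i] by auto
  then show "x = y" by auto
qed

lemma AutI:
  assumes "f \<in> extensional D" "coord_embedding D D f" "D \<subseteq> f ` D"
  shows "f \<in> Aut D"
  unfolding Aut_def
proof (intro CollectI conjI ballI allI assms(1))
  have "f ` D = D" using assms(2,3) unfolding coord_embedding_def by blast
  then show "bij_betw f D D" using coord_embedding_inj_on[OF assms(2)] by (simp add: bij_betw_def)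
  fix x y i assume xy: "x \<in> D" "y \<in> D"
  show "f x i < f y i \<longleftrightarrow> x i < y i" using assms(2) xy unfolding coord_embedding_def by blast
  show "prod_less (f x) (f y) \<longleftrightarrow> prod_less x y"
    using coord_embedding_le_iff[OF assms(2) xy] inj_onD[OF coord_embedding_inj_on[OF assms(2)]] xy
    unfolding prod_less_def by blast
qed

lemma Aut_coord_embedding: "g \<in> Aut D \<Longrightarrow> coord_embedding D D g"
  unfolding Aut_def coord_embedding_def bij_betw_def by blast

lemma Aut_mem: "g \<in> Aut D \<Longrightarrow> x \<in> D \<Longrightarrow> g x \<in> D"
  unfolding Aut_def bij_betw_def by blast

lemma Aut_image: "g \<in> Aut D \<Longrightarrow> g ` D = D"
  unfolding Aut_def bij_betw_def by blast

lemma Aut_extensional: "g \<in> Aut D \<Longrightarrow> g \<in> extensional D"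
  unfolding Aut_def by blast

lemma id_Aut: "restrict id D \<in> Aut D"
  by (rule AutI) (auto simp: coord_embedding_def)

lemma compose_Aut:
  assumes "g \<in> Aut D" "h \<in> Aut D"
  shows "compose D g h \<in> Aut D"
proof (rule AutI)
  show "coord_embedding D D (compose D g h)"
    using Aut_coord_embedding[OF assms(1)] Aut_coord_embedding[OF assms(2)] Aut_mem[OF assms(2)]
    unfolding coord_embedding_def compose_def by auto
  show "D \<subseteq> compose D g h ` D"
  proof -
    have "compose D g h ` D = g ` h ` D" by (auto simp: compose_def)
    then show ?thesis using Aut_image[OF assms(1)] Aut_image[OF assms(2)] by simp
  qed
qed (simp add: compose_def)

definition Aut_inv :: "('n \<Rightarrow> rat) set \<Rightarrow> (('n \<Rightarrow> rat) \<Rightarrow> ('n \<Rightarrow> rat)) \<Rightarrow> ('n \<Rightarrow> rat) \<Rightarrow> ('n \<Rightarrow> rat)" where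
  "Aut_inv D g = restrict (inv_into D g) D"

lemma Aut_inv_mem: "g \<in> Aut D \<Longrightarrow> x \<in> D \<Longrightarrow> Aut_inv D g x \<in> D"
  unfolding Aut_inv_def by (metis Aut_image inv_into_into restrict_apply')

lemma Aut_inv_right: "g \<in> Aut D \<Longrightarrow> x \<in> D \<Longrightarrow> g (Aut_inv D g x) = x"
  unfolding Aut_inv_def by (metis Aut_image f_inv_into_f restrict_apply')

lemma Aut_inv_left: "g \<in> Aut D \<Longrightarrow> x \<in> D \<Longrightarrow> Aut_inv D g (g x) = x"
  unfolding Aut_inv_def Aut_def bij_betw_def by (auto intro: inv_into_f_f)

lemma Aut_inv_Aut:
  assumes g: "g \<in> Aut D"
  shows "Aut_inv D g \<in> Aut D"
proof (rule AutI)
  show "coord_embedding D D (Aut_inv D g)"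
    using Aut_coord_embedding[OF g] Aut_inv_mem[OF g] Aut_inv_right[OF g]
    unfolding coord_embedding_def by (metis image_subsetI)
  show "D \<subseteq> Aut_inv D g ` D"
    using Aut_inv_left[OF g] Aut_mem[OF g] by (metis image_eqI subsetI)
qed (simp add: Aut_inv_def)

lemma compose_Aut_inv_cancel:
  assumes "h \<in> Aut D" "h0 \<in> Aut D"
  shows "compose D (compose D h (Aut_inv D h0)) h0 = h"
proof
  fix x show "compose D (compose D h (Aut_inv D h0)) h0 x = h x"
    using Aut_inv_left[OF assms(2)] Aut_mem[OF assms(2)] Aut_extensional[OF assms(1)]
    by (cases "x \<in> D") (simp_all add: compose_def extensional_def)
qed

lemma Aut_inv_id:
  assumes "x \<in> D"
  shows "Aut_inv D (restrict id D) x = x"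
proof -
  have "Aut_inv D (restrict id D) (restrict id D x) = x" using assms by (rule Aut_inv_left[OF id_Aut])
  then show ?thesis using assms by simp
qed

lemma compose_Aut_inv_apply:
  assumes "g \<in> Aut D" "k \<in> Aut D" "a \<in> D"
  shows "compose D g (Aut_inv D k) (k (Aut_inv D g a)) = a"
  using assms Aut_inv_mem[OF assms(1,3)] Aut_mem[OF assms(2)] Aut_inv_left[OF assms(2)] Aut_inv_right[OF assms(1)]
  by (simp add: compose_def)

section \<open>Homogeneity\<close>

definition coord_partial_iso :: "(('n \<Rightarrow> 'a::ord) \<times> ('n \<Rightarrow> 'a)) set \<Rightarrow> bool" where
  "coord_partial_iso R \<longleftrightarrow>
     (\<forall>x y x' y'. (x, y) \<in> R \<longrightarrow> (x', y') \<in> R \<longrightarrow> (\<forall>i. x i < x' i \<longleftrightarrow> y i < y' i))"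

lemma coord_partial_iso_converse: "coord_partial_iso R \<Longrightarrow> coord_partial_iso (R\<inverse>)"
  unfolding coord_partial_iso_def by blast

lemma coord_partial_iso_functional:
  fixes R :: "(('n \<Rightarrow> 'a::linorder) \<times> ('n \<Rightarrow> 'a)) set"
  assumes "coord_partial_iso R" "(x, y) \<in> R" "(x, y') \<in> R"
  shows "y = y'"
proof
  fix i
  have "\<not> y i < y' i" "\<not> y' i < y i" using assms unfolding coord_partial_iso_def by blast+
  then show "y i = y' i" by simp
qed

lemma interval_between_finite_sets:
  fixes L H :: "'a::{linorder, no_top, no_bot} set"
  assumes "finite L" "finite H" "\<forall>l\<in>L. \<forall>h\<in>H. l < h"
  shows "\<exists>a b. a < b \<and> (\<forall>l\<in>L. l \<le> a) \<and> (\<forall>h\<in>H. b \<le> h)"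
proof (cases "L = {}")
  case True
  obtain b where "\<forall>h\<in>H. b \<le> h"
    using assms(2) by (cases "H = {}") (auto intro: Min_le)
  moreover obtain a where "a < b" using lt_ex by blast
  ultimately show ?thesis using True by blast
next
  case False
  obtain b where b: "Max L < b" "\<forall>h\<in>H. b \<le> h"
  proof (cases "H = {}")
    case True then show ?thesis using gt_ex that by blast
  next
    case False
    then show ?thesis using assms \<open>L \<noteq> {}\<close> that[of "Min H"] by auto
  qed
  then show ?thesis using assms(1) False by (intro exI[of _ "Max L"] exI[of _ b]) auto
qed

lemma coord_partial_iso_extend:
  fixes D :: "('n \<Rightarrow> rat) set"
  assumes dense: "dense_Qn D" and ncc: "no_common_coord D"
    and R: "coord_partial_iso R" "finite R" "R \<subseteq> D \<times> D" and z: "z \<in> D"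
  shows "\<exists>z'\<in>D. coord_partial_iso (insert (z, z') R)"
proof (cases "z \<in> Domain R")
  case True
  then obtain z' where "(z, z') \<in> R" by blast
  then show ?thesis using R by (metis insert_absorb mem_Sigma_iff subsetD)
next
  case False
  define L where "L i = {y' i |y y'. (y, y') \<in> R \<and> y i < z i}" for i
  define H where "H i = {y' i |y y'. (y, y') \<in> R \<and> z i < y i}" for i
  have "\<exists>a b. a < b \<and> (\<forall>l\<in>L i. l \<le> a) \<and> (\<forall>h\<in>H i. b \<le> h)" for i
  proof (rule interval_between_finite_sets)
    have "L i \<subseteq> (\<lambda>(y, y'). y' i) ` R" "H i \<subseteq> (\<lambda>(y, y'). y' i) ` R"
      unfolding L_def H_def by force+
    then show "finite (L i)" "finite (H i)" using R(2) by (auto intro: finite_subset)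
    show "\<forall>l\<in>L i. \<forall>h\<in>H i. l < h"
      using R(1) unfolding L_def H_def coord_partial_iso_def by fastforce
  qed
  then obtain a b where ab: "\<And>i. a i < b i" "\<And>i l. l \<in> L i \<Longrightarrow> l \<le> a i" "\<And>i h. h \<in> H i \<Longrightarrow> b i \<le> h"
    by metis
  obtain z' where z': "z' \<in> D" "\<And>i. a i < z' i \<and> z' i < b i"
    using dense ab(1) unfolding dense_Qn_def by blast
  have below: "y i < z i \<longleftrightarrow> y' i < z' i" and above: "z i < y i \<longleftrightarrow> z' i < y' i"
    if "(y, y') \<in> R" for y y' i
  proof -
    have "y \<noteq> z" "y \<in> D" using False that R(3) by auto
    then have "y i \<noteq> z i" using ncc z unfolding no_common_coord_def by blast
    moreover have "y i < z i \<Longrightarrow> y' i < z' i" using ab(2)[of "y' i" i] z'(2)[of i] that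
      unfolding L_def by fastforce
    moreover have "z i < y i \<Longrightarrow> z' i < y' i" using ab(3)[of "y' i" i] z'(2)[of i] that
      unfolding H_def by fastforce
    ultimately show "y i < z i \<longleftrightarrow> y' i < z' i" "z i < y i \<longleftrightarrow> z' i < y' i"
      by (meson linorder_neqE order_less_asym)+
  qed
  have "coord_partial_iso (insert (z, z') R)"
    using R(1) below above unfolding coord_partial_iso_def by auto
  then show ?thesis using z' by blast
qed

definition finite_partial_iso :: "('n \<Rightarrow> rat) set \<Rightarrow> (('n \<Rightarrow> rat) \<times> ('n \<Rightarrow> rat)) set \<Rightarrow> bool" where
  "finite_partial_iso D R \<longleftrightarrow> coord_partial_iso R \<and> finite R \<and> R \<subseteq> D \<times> D"

definition extend_forth :: "('n \<Rightarrow> rat) set \<Rightarrow> (('n \<Rightarrow> rat) \<times> ('n \<Rightarrow> rat)) set \<Rightarrow> ('n \<Rightarrow> rat)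
    \<Rightarrow> (('n \<Rightarrow> rat) \<times> ('n \<Rightarrow> rat)) set" where
  "extend_forth D R z = insert (z, SOME z'. z' \<in> D \<and> coord_partial_iso (insert (z, z') R)) R"

definition extend_back :: "('n \<Rightarrow> rat) set \<Rightarrow> (('n \<Rightarrow> rat) \<times> ('n \<Rightarrow> rat)) set \<Rightarrow> ('n \<Rightarrow> rat)
    \<Rightarrow> (('n \<Rightarrow> rat) \<times> ('n \<Rightarrow> rat)) set" where
  "extend_back D R z = (extend_forth D (R\<inverse>) z)\<inverse>"

primrec back_and_forth :: "('n \<Rightarrow> rat) set \<Rightarrow> (('n \<Rightarrow> rat) \<times> ('n \<Rightarrow> rat)) set \<Rightarrow> (nat \<Rightarrow> 'n \<Rightarrow> rat)
    \<Rightarrow> nat \<Rightarrow> (('n \<Rightarrow> rat) \<times> ('n \<Rightarrow> rat)) set" where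
  "back_and_forth D R s 0 = R"
| "back_and_forth D R s (Suc k) = extend_back D (extend_forth D (back_and_forth D R s k) (s k)) (s k)"

lemma finite_partial_iso_converse: "finite_partial_iso D R \<Longrightarrow> finite_partial_iso D (R\<inverse>)"
  unfolding finite_partial_iso_def using coord_partial_iso_converse by auto

lemma extend_forth:
  assumes "dense_Qn D" "no_common_coord D" "finite_partial_iso D R" "z \<in> D"
  shows "finite_partial_iso D (extend_forth D R z)" "R \<subseteq> extend_forth D R z" "z \<in> Domain (extend_forth D R z)"
proof -
  let ?P = "\<lambda>z'. z' \<in> D \<and> coord_partial_iso (insert (z, z') R)"
  have "?P (SOME z'. ?P z')"
    using someI_ex coord_partial_iso_extend[OF assms(1,2) _ _ _ assms(4)] assms(3)
    unfolding finite_partial_iso_def by (metis (no_types, lifting))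
  then show "finite_partial_iso D (extend_forth D R z)"
    using assms(3,4) unfolding finite_partial_iso_def extend_forth_def by auto
qed (auto simp: extend_forth_def)

lemma extend_back:
  assumes "dense_Qn D" "no_common_coord D" "finite_partial_iso D R" "z \<in> D"
  shows "finite_partial_iso D (extend_back D R z)" "R \<subseteq> extend_back D R z" "z \<in> Range (extend_back D R z)"
  using extend_forth[OF assms(1,2) finite_partial_iso_converse[OF assms(3)] assms(4)]
  unfolding extend_back_def by (auto dest: finite_partial_iso_converse)

lemma back_and_forth:
  assumes "dense_Qn D" "no_common_coord D" "finite_partial_iso D R" "range s \<subseteq> D"
  shows "finite_partial_iso D (back_and_forth D R s k)"
    and "back_and_forth D R s k \<subseteq> back_and_forth D R s (Suc k)"
    and "s k \<in> Domain (back_and_forth D R s (Suc k))"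
    and "s k \<in> Range (back_and_forth D R s (Suc k))"
proof -
  have s: "s k \<in> D" for k using assms(4) by blast
  show inv: "finite_partial_iso D (back_and_forth D R s k)" for k
    by (induction k) (simp_all add: assms(3) extend_forth extend_back assms(1,2) s)
  note f = extend_forth[OF assms(1,2) inv[of k] s[of k]]
  note b = extend_back[OF assms(1,2) f(1) s[of k]]
  show "back_and_forth D R s k \<subseteq> back_and_forth D R s (Suc k)"
    "s k \<in> Domain (back_and_forth D R s (Suc k))" "s k \<in> Range (back_and_forth D R s (Suc k))"
    using f b by auto
qed

lemma Aut_of_coord_partial_iso:
  fixes U :: "(('n \<Rightarrow> rat) \<times> ('n \<Rightarrow> rat)) set"
  assumes U: "coord_partial_iso U" "U \<subseteq> D \<times> D" "D \<subseteq> Domain U" "D \<subseteq> Range U"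
  shows "\<exists>k\<in>Aut D. \<forall>x y. (x, y) \<in> U \<longrightarrow> k x = y"
proof
  define k where "k = restrict (\<lambda>x. THE y. (x, y) \<in> U) D"
  have k: "k x = y" if xy: "(x, y) \<in> U" for x y
  proof -
    have "(THE y. (x, y) \<in> U) = y"
      using xy coord_partial_iso_functional[OF U(1) xy] by (intro the_equality) (blast, metis)
    moreover have "x \<in> D" using xy U(2) by blast
    ultimately show ?thesis unfolding k_def by simp
  qed
  then show "\<forall>x y. (x, y) \<in> U \<longrightarrow> k x = y" by blast
  have kU: "(x, k x) \<in> U" if x: "x \<in> D" for x
  proof -
    obtain y where "(x, y) \<in> U" using x U(3) by blast
    then show ?thesis using k by simp
  qed
  show "k \<in> Aut D"
  proof (rule AutI)
    show "k \<in> extensional D" unfolding k_def by simp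
    show "coord_embedding D D k"
      unfolding coord_embedding_def
    proof (intro conjI image_subsetI ballI allI)
      show "k x \<in> D" if "x \<in> D" for x using kU[OF that] U(2) by blast
      show "k x i < k y i \<longleftrightarrow> x i < y i" if "x \<in> D" "y \<in> D" for x y i
        using U(1) kU[OF that(1)] kU[OF that(2)] unfolding coord_partial_iso_def by blast
    qed
    show "D \<subseteq> k ` D"
    proof
      fix w assume "w \<in> D"
      then obtain z where zw: "(z, w) \<in> U" using U(4) by blast
      then have "z \<in> D" using U(2) by blast
      then show "w \<in> k ` D" using k[OF zw] by blast
    qed
  qed
qed

lemma back_and_forth_union:
  fixes D :: "('n \<Rightarrow> rat) set"
  assumes dense: "dense_Qn D" and ncc: "no_common_coord D" and R: "finite_partial_iso D R"
    and s: "range s = D"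
  shows "coord_partial_iso (\<Union>k. back_and_forth D R s k)" "(\<Union>k. back_and_forth D R s k) \<subseteq> D \<times> D"
    "D \<subseteq> Domain (\<Union>k. back_and_forth D R s k)" "D \<subseteq> Range (\<Union>k. back_and_forth D R s k)"
    "R \<subseteq> (\<Union>k. back_and_forth D R s k)"
proof -
  let ?C = "back_and_forth D R s"
  note bf = back_and_forth[OF dense ncc R equalityD1[OF s]]
  have mono: "?C k \<subseteq> ?C k'" if "k \<le> k'" for k k'
    using lift_Suc_mono_le[of ?C, OF bf(2) that] .
  show "coord_partial_iso (\<Union>k. ?C k)" unfolding coord_partial_iso_def
  proof (intro allI impI)
    fix x y x' y' i assume "(x, y) \<in> (\<Union>k. ?C k)" "(x', y') \<in> (\<Union>k. ?C k)"
    then obtain k k' where "(x, y) \<in> ?C k" "(x', y') \<in> ?C k'" by blast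
    then have "(x, y) \<in> ?C (max k k')" "(x', y') \<in> ?C (max k k')"
      using mono[of k "max k k'"] mono[of k' "max k k'"] by auto
    then show "x i < x' i \<longleftrightarrow> y i < y' i"
      using bf(1) unfolding finite_partial_iso_def coord_partial_iso_def by blast
  qed
  show "(\<Union>k. ?C k) \<subseteq> D \<times> D" using bf(1) unfolding finite_partial_iso_def by blast
  show "D \<subseteq> Domain (\<Union>k. ?C k)" "D \<subseteq> Range (\<Union>k. ?C k)"
  proof (safe)
    fix x assume "x \<in> D"
    then obtain k where "x = s k" using s by blast
    then show "x \<in> Domain (\<Union>k. ?C k)" "x \<in> Range (\<Union>k. ?C k)" using bf(3,4)[of k] by blast+
  qed
  have "R = ?C 0" by simp
  then show "R \<subseteq> (\<Union>k. ?C k)" by blast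
qed

lemma coord_embedding_extends_to_Aut:
  fixes D :: "('n::finite \<Rightarrow> rat) set"
  assumes dense: "dense_Qn D" and ncc: "no_common_coord D"
    and B: "finite B" "B \<subseteq> D" and \<phi>: "coord_embedding B D \<phi>"
  shows "\<exists>h\<in>Aut D. \<forall>y\<in>B. h y = \<phi> y"
proof -
  define R where "R = (\<lambda>y. (y, \<phi> y)) ` B"
  have R: "finite_partial_iso D R"
    unfolding finite_partial_iso_def coord_partial_iso_def
  proof (intro conjI allI impI)
    show "finite R" unfolding R_def using B(1) by simp
    show "R \<subseteq> D \<times> D" unfolding R_def using B(2) \<phi> unfolding coord_embedding_def by auto
    fix x y x' y' i assume "(x, y) \<in> R" "(x', y') \<in> R"
    then show "x i < x' i \<longleftrightarrow> y i < y' i" using \<phi> unfolding R_def coord_embedding_def by auto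
  qed
  have "D \<noteq> {}"
    using dense[unfolded dense_Qn_def, rule_format, of "\<lambda>_. 0" "\<lambda>_. 1"] by auto
  then have "range (from_nat_into D) = D" by (simp add: range_from_nat_into)
  note U = back_and_forth_union[OF dense ncc R this]
  obtain h where h: "h \<in> Aut D"
      "\<forall>x y. (x, y) \<in> (\<Union>k. back_and_forth D R (from_nat_into D) k) \<longrightarrow> h x = y"
    using Aut_of_coord_partial_iso[OF U(1-4)] by blast
  have "h y = \<phi> y" if "y \<in> B" for y
  proof -
    have "(y, \<phi> y) \<in> R" unfolding R_def using that by blast
    then show ?thesis using h(2) U(5) by blast
  qed
  then show ?thesis using h(1) by blast
qed

section \<open>The Ramsey property\<close>

definition coord_rank :: "('n \<Rightarrow> 'a::ord) set \<Rightarrow> 'n \<Rightarrow> ('n \<Rightarrow> 'a) \<Rightarrow> nat" where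
  "coord_rank A i x = card {y \<in> A. y i < x i}"

lemma coord_rank_less_card:
  fixes A :: "('n \<Rightarrow> 'a::preorder) set"
  shows "finite A \<Longrightarrow> x \<in> A \<Longrightarrow> coord_rank A i x < card A"
  unfolding coord_rank_def by (rule psubset_card_mono) auto

lemma coord_rank_less_iff:
  fixes A :: "('n \<Rightarrow> 'a::linorder) set"
  assumes "finite A" "x \<in> A" "y \<in> A"
  shows "coord_rank A i x < coord_rank A i y \<longleftrightarrow> x i < y i"
proof -
  have mono: "coord_rank A i u < coord_rank A i v" if "u \<in> A" "v \<in> A" "u i < v i" for u v
    unfolding coord_rank_def using that assms(1) by (intro psubset_card_mono) auto
  show ?thesis
  proof (cases "x i" "y i" rule: linorder_cases)
    case equal
    then show ?thesis unfolding coord_rank_def by simp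
  qed (use mono[OF assms(2,3)] mono[OF assms(3,2)] in auto)
qed

lemma mult_add_less_mult_add_iff:
  fixes k k' r r' N :: nat
  assumes "r < N" "r' < N"
  shows "k * N + r < k' * N + r' \<longleftrightarrow> k < k' \<or> (k = k' \<and> r < r')"
proof -
  have less: "k * N + r < k' * N + r'" if "k < k'" "r < N" for k k' r r' :: nat
  proof -
    have "Suc k * N \<le> k' * N" using that by (intro mult_le_mono1) simp
    then show ?thesis using that by simp
  qed
  show ?thesis
    using less[of k k' r r'] less[of k' k r' r] assms by (cases k k' rule: linorder_cases) auto
qed

definition slot :: "('n \<Rightarrow> nat) \<Rightarrow> ('n \<Rightarrow> 'a::ord) set \<Rightarrow> 'n \<times> ('n \<Rightarrow> 'a) \<Rightarrow> nat" where
  "slot idx A = (\<lambda>(i, x). idx i * card A + coord_rank A i x)"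

lemma slot_less_iff:
  fixes A :: "('n \<Rightarrow> 'a::linorder) set"
  assumes "inj idx" "finite A" "x \<in> A" "y \<in> A"
  shows "slot idx A (i, x) < slot idx A (j, y) \<longleftrightarrow> idx i < idx j \<or> (i = j \<and> x i < y i)"
proof -
  have "slot idx A (i, x) < slot idx A (j, y) \<longleftrightarrow>
      idx i < idx j \<or> (idx i = idx j \<and> coord_rank A i x < coord_rank A j y)"
    unfolding slot_def
    using mult_add_less_mult_add_iff[OF coord_rank_less_card[OF assms(2,3)] coord_rank_less_card[OF assms(2,4)]]
    by simp
  then show ?thesis using coord_rank_less_iff[OF assms(2-4)] injD[OF assms(1)] by auto
qed

lemma slot_bij:
  fixes A :: "('n::finite \<Rightarrow> rat) set"
  assumes idx: "bij_betw idx UNIV {..<CARD('n)}" and A: "finite A" "no_common_coord A"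
  shows "bij_betw (slot idx A) (UNIV \<times> A) {..<CARD('n) * card A}"
proof -
  have inj: "inj idx" using idx by (simp add: bij_betw_def)
  have "inj_on (slot idx A) (UNIV \<times> A)"
  proof (rule inj_onI, clarify)
    fix i x j y assume xy: "x \<in> A" "y \<in> A" and eq: "slot idx A (i, x) = slot idx A (j, y)"
    have "\<not> (idx i < idx j \<or> i = j \<and> x i < y i)" "\<not> (idx j < idx i \<or> j = i \<and> y j < x j)"
      using slot_less_iff[OF inj A(1) xy, of i j] slot_less_iff[OF inj A(1) xy(2,1), of j i] eq by auto
    then have "i = j" "x i = y i" using injD[OF inj] by (metis linorder_neqE)+
    then show "i = j \<and> x = y" using A(2) xy unfolding no_common_coord_def by blast
  qed
  moreover have "slot idx A ` (UNIV \<times> A) \<subseteq> {..<CARD('n) * card A}"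
  proof clarify
    fix i x assume "x \<in> A"
    then have "idx i * card A + coord_rank A i x < Suc (idx i) * card A"
      using coord_rank_less_card[OF A(1)] by simp
    also have "\<dots> \<le> CARD('n) * card A"
      using idx by (intro mult_le_mono1) (auto simp: bij_betw_def Suc_le_eq)
    finally show "slot idx A (i, x) < CARD('n) * card A" unfolding slot_def by simp
  qed
  moreover have "card ((UNIV :: 'n set) \<times> A) = CARD('n) * card A" by (simp add: card_cartesian_product)
  ultimately show ?thesis
    by (metis bij_betw_def card_image card_lessThan card_subset_eq finite_lessThan)
qed

lemma slot_coord_embedding_less_iff:
  fixes A B :: "('n \<Rightarrow> 'a::linorder) set"
  assumes "inj idx" "finite A" "finite B" "coord_embedding A B e" "x \<in> A" "y \<in> A"
  shows "slot idx B (i, e x) < slot idx B (j, e y) \<longleftrightarrow> slot idx A (i, x) < slot idx A (j, y)"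
proof -
  have "e x \<in> B" "e y \<in> B" "e x i < e y i \<longleftrightarrow> x i < y i"
    using assms(4-6) unfolding coord_embedding_def by auto
  then show ?thesis using slot_less_iff[OF assms(1,3)] slot_less_iff[OF assms(1,2,5,6)] by simp
qed

lemma nth_sorted_list_of_set_less_iff:
  assumes "finite T" "i < card T" "j < card T"
  shows "sorted_list_of_set T ! i < sorted_list_of_set T ! j \<longleftrightarrow> i < j"
proof -
  have "sorted_wrt (<) (sorted_list_of_set T)" by (rule strict_sorted_list_of_set)
  then have "sorted_list_of_set T ! i < sorted_list_of_set T ! j" if "i < j" "j < card T" for i j
    using that assms(1) by (simp add: sorted_wrt_nth_less)
  then show ?thesis using assms(2,3) by (metis less_asym linorder_neqE)
qed

lemma inj_on_order_iso:
  fixes f :: "'q \<Rightarrow> 'a::linorder" and g :: "'q \<Rightarrow> 'b::linorder"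
  assumes "inj_on g S" "\<forall>q\<in>S. \<forall>q'\<in>S. f q < f q' \<longleftrightarrow> g q < g q'"
  shows "inj_on f S"
  using assms by (intro inj_onI) (metis inj_on_eq_iff less_irrefl linorder_neqE)

lemma nth_sorted_list_of_set_image:
  fixes val :: "'q \<Rightarrow> 'a::linorder"
  assumes \<kappa>: "bij_betw \<kappa> S {..<N}" and val: "\<forall>q\<in>S. \<forall>q'\<in>S. val q < val q' \<longleftrightarrow> \<kappa> q < \<kappa> q'"
    and s: "s \<in> S"
  shows "sorted_list_of_set (val ` S) ! \<kappa> s = val s"
proof -
  define h where "h = val \<circ> inv_into S \<kappa>"
  have h_less: "h k < h k'" if "k < k'" "k' < N" for k k'
    using that val \<kappa> unfolding h_def
    by (simp add: bij_betw_inv_into_right bij_betw_imp_surj_on inv_into_into)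
  have "finite (val ` S)" using bij_betw_finite[OF \<kappa>] by simp
  have "inj_on val S" using inj_on_order_iso[OF bij_betw_imp_inj_on[OF \<kappa>] val] .
  then have "card (val ` S) = N" using \<kappa> by (simp add: card_image bij_betw_same_card)
  moreover have "set (map h [0..<N]) = val ` S"
  proof -
    have "inv_into S \<kappa> ` {..<N} = S"
      using \<kappa> by (metis bij_betw_def inv_into_image_cancel order_refl)
    moreover have "set (map h [0..<N]) = val ` inv_into S \<kappa> ` {..<N}"
      unfolding h_def by (auto simp: lessThan_atLeast0)
    ultimately show ?thesis by simp
  qed
  moreover have "sorted_wrt (<) (map h [0..<N])"
    using h_less by (simp add: sorted_wrt_iff_nth_less)
  ultimately have "sorted_list_of_set (val ` S) = map h [0..<N]"
    using \<open>finite (val ` S)\<close>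
    by (metis length_map length_upt minus_nat.diff_0 sorted_list_of_set_unique subset_UNIV)
  moreover have "\<kappa> s < N" "inv_into S \<kappa> (\<kappa> s) = s"
    using \<kappa> s by (auto simp: bij_betw_def)
  ultimately show ?thesis unfolding h_def by simp
qed

lemma no_common_coord_subset: "no_common_coord D \<Longrightarrow> A \<subseteq> D \<Longrightarrow> no_common_coord A"
  unfolding no_common_coord_def by blast

lemma dense_Qn_grid:
  fixes D :: "('n \<Rightarrow> rat) set"
  assumes "dense_Qn D"
  obtains d :: "('n \<Rightarrow> nat) \<Rightarrow> ('n \<Rightarrow> rat)"
  where "\<And>u. d u \<in> D" "\<And>u v i. u i < v i \<Longrightarrow> d u i < d v i"
proof -
  have "\<exists>q\<in>D. \<forall>i. of_nat (u i) - 1/2 < q i \<and> q i < of_nat (u i) + 1/2" for u :: "'n \<Rightarrow> nat"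
    using assms[unfolded dense_Qn_def, rule_format, of "\<lambda>i. of_nat (u i) - 1/2" "\<lambda>i. of_nat (u i) + 1/2"]
    by simp
  then obtain d where d: "\<And>u. d u \<in> D"
    and near: "\<And>u i. of_nat (u i) - 1/2 < d u i \<and> d u i < of_nat (u i) + (1/2 :: rat)"
    by metis
  have "d u i < d v i" if "u i < v i" for u v i
  proof -
    have "of_nat (u i) + 1 \<le> (of_nat (v i) :: rat)" using that by simp
    then show ?thesis using near[of u i] near[of v i] by linarith
  qed
  then show ?thesis using that d by blast
qed

(* A point x of A is sent near the integer vector whose i-th entry is the element of W in
   position slot idx A (i, x); the slots enumerate UNIV \<times> A lexicographically by (idx i, x i). *)
definition grid_copy ::
  "('n \<Rightarrow> nat) \<Rightarrow> (('n \<Rightarrow> nat) \<Rightarrow> 'p) \<Rightarrow> nat set \<Rightarrow> ('n \<Rightarrow> 'a::ord) set \<Rightarrow> ('n \<Rightarrow> 'a) \<Rightarrow> 'p" where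
  "grid_copy idx d W A x = d (\<lambda>i. sorted_list_of_set W ! slot idx A (i, x))"

lemma grid_copy_less_iff:
  fixes A :: "('n::finite \<Rightarrow> rat) set" and d :: "('n \<Rightarrow> nat) \<Rightarrow> ('n \<Rightarrow> rat)"
  assumes idx: "bij_betw idx UNIV {..<CARD('n)}" and d: "\<And>u v i. u i < v i \<Longrightarrow> d u i < d v i"
    and A: "finite A" "no_common_coord A" and W: "finite W" "card W = CARD('n) * card A"
    and xy: "x \<in> A" "y \<in> A"
  shows "grid_copy idx d W A x i < grid_copy idx d W A y i \<longleftrightarrow> x i < y i"
proof -
  have inj: "inj idx" using idx by (simp add: bij_betw_def)
  have less: "grid_copy idx d W A x' i < grid_copy idx d W A y' i"
    if x'y': "x' \<in> A" "y' \<in> A" "x' i < y' i" for x' y'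
  proof -
    have "slot idx A (i, x') < slot idx A (i, y')" using slot_less_iff[OF inj A(1) x'y'(1,2)] x'y'(3) by simp
    moreover have "slot idx A (i, x') < card W" "slot idx A (i, y') < card W"
      using bij_betwE[OF slot_bij[OF idx A]] x'y' W(2) by auto
    ultimately show ?thesis unfolding grid_copy_def using nth_sorted_list_of_set_less_iff[OF W(1)] d by simp
  qed
  show ?thesis
  proof (cases "x = y")
    case False
    then have "x i \<noteq> y i" using A(2) xy unfolding no_common_coord_def by blast
    then show ?thesis using less[OF xy] less[OF xy(2,1)] by (meson less_asym linorder_neqE)
  qed simp
qed

lemma grid_copy_comp_coord_embedding:
  fixes A B :: "('n::finite \<Rightarrow> rat) set"
  assumes idx: "bij_betw idx UNIV {..<CARD('n)}"
    and A: "finite A" "no_common_coord A" and B: "finite B" "no_common_coord B"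
    and e: "coord_embedding A B e" and T: "finite T" "card T = CARD('n) * card B"
  obtains W where "W \<subseteq> T" "card W = CARD('n) * card A"
    "\<And>x. x \<in> A \<Longrightarrow> grid_copy idx d T B (e x) = grid_copy idx d W A x"
proof -
  have inj: "inj idx" using idx by (simp add: bij_betw_def)
  define S where "S = (UNIV :: 'n set) \<times> A"
  define val where "val = (\<lambda>(i, x). sorted_list_of_set T ! slot idx B (i, e x))"
  have slotB: "slot idx B (i, e x) < card T" if "x \<in> A" for i x
    using bij_betwE[OF slot_bij[OF idx B]] e that T(2) unfolding coord_embedding_def by auto
  have val_iso: "\<forall>q\<in>S. \<forall>q'\<in>S. val q < val q' \<longleftrightarrow> slot idx A q < slot idx A q'"
  proof (unfold S_def, clarify)
    fix i x j y assume xy: "x \<in> A" "y \<in> A"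
    have "val (i, x) < val (j, y) \<longleftrightarrow> slot idx B (i, e x) < slot idx B (j, e y)"
      unfolding val_def using nth_sorted_list_of_set_less_iff[OF T(1) slotB slotB] xy by simp
    then show "val (i, x) < val (j, y) \<longleftrightarrow> slot idx A (i, x) < slot idx A (j, y)"
      using slot_coord_embedding_less_iff[OF inj A(1) B(1) e xy] by simp
  qed
  have slotA: "bij_betw (slot idx A) S {..<CARD('n) * card A}"
    unfolding S_def using slot_bij[OF idx A] .
  define W where "W = val ` S"
  show ?thesis
  proof (rule that)
    show "W \<subseteq> T"
    proof
      fix w assume "w \<in> W"
      then obtain i x where "x \<in> A" "w = sorted_list_of_set T ! slot idx B (i, e x)"
        unfolding W_def S_def val_def by auto
      then show "w \<in> T" using slotB T(1) by (metis length_sorted_list_of_set nth_mem set_sorted_list_of_set)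
    qed
    show "card W = CARD('n) * card A"
      unfolding W_def using inj_on_order_iso[OF bij_betw_imp_inj_on[OF slotA] val_iso]
        bij_betw_same_card[OF slotA] by (simp add: card_image)
    fix x assume "x \<in> A"
    then have "sorted_list_of_set W ! slot idx A (i, x) = sorted_list_of_set T ! slot idx B (i, e x)" for i
      using nth_sorted_list_of_set_image[OF slotA val_iso, of "(i, x)"] unfolding W_def S_def val_def by simp
    then show "grid_copy idx d T B (e x) = grid_copy idx d W A x" unfolding grid_copy_def by simp
  qed
qed

lemma Ramsey_finite_homogeneous_set:
  fixes f :: "nat set \<Rightarrow> 'c"
  assumes C: "finite C" "\<And>W. f W \<in> C"
  obtains T t where "finite T" "card T = n" "t \<in> C" "\<And>W. W \<subseteq> T \<Longrightarrow> card W = r \<Longrightarrow> f W = t"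
proof -
  obtain en where en: "bij_betw en C {0..<card C}" using ex_bij_betw_finite_nat[OF C(1)] by blast
  have "en x < card C" if "x \<in> C" for x using en that by (auto simp: bij_betw_def)
  then have "\<forall>W. W \<subseteq> UNIV \<and> finite W \<and> card W = r \<longrightarrow> en (f W) < card C" using C(2) by blast
  then have "\<exists>Y t0. Y \<subseteq> UNIV \<and> infinite Y \<and> t0 < card C \<and>
      (\<forall>W. W \<subseteq> Y \<and> finite W \<and> card W = r \<longrightarrow> en (f W) = t0)"
    by (intro Ramsey) simp_all
  then obtain Y t0 where Y: "infinite Y" "t0 < card C"
    "\<forall>W. W \<subseteq> Y \<and> finite W \<and> card W = r \<longrightarrow> en (f W) = t0"
    by auto
  obtain T where T: "T \<subseteq> Y" "finite T" "card T = n"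
    using infinite_arbitrarily_large[OF Y(1)] by blast
  show ?thesis
  proof (rule that[OF T(2,3)])
    show "inv_into C en t0 \<in> C" using en Y(2) by (auto simp: bij_betw_def inv_into_into)
    fix W assume W: "W \<subseteq> T" "card W = r"
    then have "en (f W) = t0" using Y(3) T(1,2) finite_subset by blast
    then show "f W = inv_into C en t0" using bij_betw_inv_into_left[OF en C(2)] by metis
  qed
qed

lemma ramsey_property:
  fixes D :: "('n::finite \<Rightarrow> rat) set" and c :: "(('n \<Rightarrow> rat) \<Rightarrow> ('n \<Rightarrow> rat)) \<Rightarrow> 'c"
  assumes dense: "dense_Qn D" and ncc: "no_common_coord D"
    and AB: "finite B" "A \<subseteq> B" "B \<subseteq> D" and C: "finite C" "\<And>e. c e \<in> C"
  obtains \<phi> t where "coord_embedding B D \<phi>" "t \<in> C"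
    "\<And>e. coord_embedding A B e \<Longrightarrow> c (restrict (\<phi> \<circ> e) A) = t"
proof -
  obtain idx :: "'n \<Rightarrow> nat" where idx: "bij_betw idx UNIV {..<CARD('n)}"
    using ex_bij_betw_finite_nat[of "UNIV :: 'n set"] by (auto simp: lessThan_atLeast0)
  obtain d :: "('n \<Rightarrow> nat) \<Rightarrow> ('n \<Rightarrow> rat)" where d: "\<And>u. d u \<in> D" "\<And>u v i. u i < v i \<Longrightarrow> d u i < d v i"
    using dense_Qn_grid[OF dense] by blast
  have A: "finite A" "no_common_coord A"
    using finite_subset[OF AB(2,1)] no_common_coord_subset[OF ncc, of A] AB(2,3) by auto
  have B: "finite B" "no_common_coord B" using AB(1) no_common_coord_subset[OF ncc AB(3)] by auto
  have colour_C: "\<And>W. c (restrict (grid_copy idx d W A) A) \<in> C" using C(2) .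
  obtain T t where T: "finite T" "card T = CARD('n) * card B" "t \<in> C"
    "\<And>W. W \<subseteq> T \<Longrightarrow> card W = CARD('n) * card A \<Longrightarrow> c (restrict (grid_copy idx d W A) A) = t"
    using Ramsey_finite_homogeneous_set[where f = "\<lambda>W. c (restrict (grid_copy idx d W A) A)"
        and n = "CARD('n) * card B" and r = "CARD('n) * card A", OF C(1) colour_C]
    by blast
  show ?thesis
  proof (rule that[OF _ T(3)])
    have "grid_copy idx d T B y \<in> D" for y by (simp add: grid_copy_def d(1))
    then show "coord_embedding B D (grid_copy idx d T B)"
      unfolding coord_embedding_def using grid_copy_less_iff[where d = d, OF idx d(2) B T(1,2)] by blast
    fix e assume e: "coord_embedding A B e"
    obtain W where W: "W \<subseteq> T" "card W = CARD('n) * card A"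
      "\<And>x. x \<in> A \<Longrightarrow> grid_copy idx d T B (e x) = grid_copy idx d W A x"
      using grid_copy_comp_coord_embedding[OF idx A B e T(1,2)] by blast
    have "restrict (grid_copy idx d T B \<circ> e) A = restrict (grid_copy idx d W A) A"
      using W(3) by (intro restrict_ext) simp
    then show "c (restrict (grid_copy idx d T B \<circ> e) A) = t" using T(4)[OF W(1,2)] by simp
  qed
qed

section \<open>Fixed points from finite open covers\<close>

lemma compact_space_pointwise_subcover:
  assumes "compact_space X" "\<And>x. x \<in> topspace X \<Longrightarrow> openin X (N x)" "\<And>x. x \<in> topspace X \<Longrightarrow> x \<in> N x"
  obtains Y where "finite Y" "Y \<subseteq> topspace X" "topspace X \<subseteq> (\<Union>y\<in>Y. N y)"
proof -
  have "\<exists>\<F>. finite \<F> \<and> \<F> \<subseteq> N ` topspace X \<and> topspace X \<subseteq> \<Union>\<F>"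
    using assms(1) unfolding compact_space_def by (rule compactinD) (use assms(2,3) in auto)
  then obtain \<F> where \<F>: "finite \<F>" "\<F> \<subseteq> N ` topspace X" "topspace X \<subseteq> \<Union>\<F>"
    by blast
  obtain Y where "Y \<subseteq> topspace X" "finite Y" "\<F> = N ` Y"
    using finite_subset_image[OF \<F>(1,2)] by blast
  then show ?thesis using that \<F>(3) by blast
qed

lemma compact_Hausdorff_separate_closures:
  assumes X: "compact_space X" "Hausdorff_space X" and xy: "x \<in> topspace X" "y \<in> topspace X" "x \<noteq> y"
  obtains P Q where "openin X P" "openin X Q" "x \<in> P" "y \<in> Q" "disjnt (X closure_of P) (X closure_of Q)"
proof -
  have "normal_space X" using X compact_Hausdorff_or_regular_imp_normal_space by blast
  then have "\<exists>P Q. openin X P \<and> openin X Q \<and> {x} \<subseteq> P \<and> {y} \<subseteq> Q \<and>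
      disjnt (X closure_of P) (X closure_of Q)"
    by (rule normal_space_disjoint_closures[THEN iffD1, rule_format])
      (use xy in \<open>auto simp: closedin_Hausdorff_singleton X(2)\<close>)
  then show ?thesis using that by blast
qed

definition cover_stable :: "'b topology \<Rightarrow> ('g \<Rightarrow> 'b \<Rightarrow> 'b) \<Rightarrow> 'g set \<Rightarrow> bool" where
  "cover_stable X act G \<longleftrightarrow>
     (\<forall>\<W> \<Gamma>. finite \<W> \<and> (\<forall>W\<in>\<W>. openin X W) \<and> topspace X \<subseteq> \<Union>\<W> \<and> finite \<Gamma> \<and> \<Gamma> \<subseteq> G
        \<longrightarrow> (\<exists>x\<in>topspace X. \<exists>W\<in>\<W>. x \<in> W \<and> (\<forall>g\<in>\<Gamma>. act g x \<in> W)))"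

lemma cover_avoiding_closures:
  assumes Y: "finite Y" and PQ: "\<forall>y\<in>Y. P y \<subseteq> topspace X \<and> Q y \<subseteq> topspace X \<and>
      disjnt (X closure_of P y) (X closure_of Q y)"
  obtains \<W> where "finite \<W>" "\<forall>W\<in>\<W>. openin X W" "topspace X \<subseteq> \<Union>\<W>"
    "\<forall>W\<in>\<W>. \<forall>y\<in>Y. disjnt W (P y) \<or> disjnt W (Q y)"
proof -
  define side where "side S y = topspace X - X closure_of (if y \<in> S then P y else Q y)" for S y
  define \<W> where "\<W> = (\<lambda>S. (\<Inter>y\<in>Y. side S y) \<inter> topspace X) ` Pow Y"
  have "finite \<W>" unfolding \<W>_def using Y by simp
  moreover have "\<forall>W\<in>\<W>. openin X W"
  proof -
    have "openin X (side S y)" for S y unfolding side_def by (simp add: openin_diff closedin_closure_of)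
    then show ?thesis unfolding \<W>_def using Y by (auto intro!: openin_INT)
  qed
  moreover have "topspace X \<subseteq> \<Union>\<W>"
  proof
    fix z assume z: "z \<in> topspace X"
    define S where "S = {y \<in> Y. z \<notin> X closure_of P y}"
    have "z \<in> side S y" if y: "y \<in> Y" for y
    proof (cases "y \<in> S")
      case True
      then show ?thesis using z unfolding side_def S_def by simp
    next
      case False
      then have "z \<in> X closure_of P y" using y unfolding S_def by blast
      then have "z \<notin> X closure_of Q y" using PQ y unfolding disjnt_def by blast
      then show ?thesis using False z unfolding side_def by simp
    qed
    then have "z \<in> (\<Inter>y\<in>Y. side S y) \<inter> topspace X" using z by blast
    moreover have "S \<in> Pow Y" unfolding S_def by blast
    ultimately show "z \<in> \<Union>\<W>" unfolding \<W>_def by blast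
  qed
  moreover have "disjnt W (P y) \<or> disjnt W (Q y)" if W: "W \<in> \<W>" and y: "y \<in> Y" for W y
  proof -
    obtain S where S: "W \<subseteq> side S y" using W y unfolding \<W>_def by blast
    have "P y \<subseteq> topspace X" "Q y \<subseteq> topspace X" using PQ y by auto
    then have "P y \<subseteq> X closure_of P y" "Q y \<subseteq> X closure_of Q y" by (simp_all add: closure_of_subset)
    then show ?thesis using S unfolding side_def disjnt_def by (cases "y \<in> S") auto
  qed
  ultimately show ?thesis using that by blast
qed

lemma separate_moved_points:
  assumes X: "compact_space X" "Hausdorff_space X" and cont: "\<forall>g\<in>G. continuous_map X X (act g)"
    and moved: "\<forall>x\<in>topspace X. \<exists>g\<in>G. act g x \<noteq> x"
  obtains g P Q where "\<And>x. x \<in> topspace X \<Longrightarrow> g x \<in> G \<and> openin X (P x) \<and> openin X (Q x) \<and>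
    x \<in> P x \<and> act (g x) x \<in> Q x \<and> disjnt (X closure_of P x) (X closure_of Q x)"
proof -
  have "\<exists>g P Q. g \<in> G \<and> openin X P \<and> openin X Q \<and> x \<in> P \<and> act g x \<in> Q \<and>
      disjnt (X closure_of P) (X closure_of Q)" if x: "x \<in> topspace X" for x
  proof -
    obtain g where g: "g \<in> G" "act g x \<noteq> x" using moved x by blast
    have "act g x \<in> topspace X" using bspec[OF cont g(1)] x unfolding continuous_map_def by blast
    then obtain P Q where "openin X P" "openin X Q" "x \<in> P" "act g x \<in> Q"
        "disjnt (X closure_of P) (X closure_of Q)"
      using compact_Hausdorff_separate_closures[OF X x _ g(2)[symmetric]] by blast
    then show ?thesis using g(1) by blast
  qed
  then show ?thesis using that by metis
qed

lemma common_fixed_point_if_cover_stable: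
  assumes X: "compact_space X" "Hausdorff_space X"
    and cont: "\<forall>g\<in>G. continuous_map X X (act g)" and stable: "cover_stable X act G"
  shows "\<exists>x\<in>topspace X. \<forall>g\<in>G. act g x = x"
proof (rule ccontr)
  assume "\<not> ?thesis"
  then have "\<forall>x\<in>topspace X. \<exists>g\<in>G. act g x \<noteq> x" by blast
  then obtain g P Q where sep: "\<And>x. x \<in> topspace X \<Longrightarrow> g x \<in> G \<and> openin X (P x) \<and> openin X (Q x) \<and>
      x \<in> P x \<and> act (g x) x \<in> Q x \<and> disjnt (X closure_of P x) (X closure_of Q x)"
    by (rule separate_moved_points[OF X cont]) blast
  define N where "N x = P x \<inter> {z \<in> topspace X. act (g x) z \<in> Q x}" for x
  have "openin X (N x)" if x: "x \<in> topspace X" for x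
  proof -
    have "g x \<in> G" "openin X (P x)" "openin X (Q x)" using sep[OF x] by auto
    then show ?thesis
      unfolding N_def by (intro openin_Int openin_continuous_map_preimage[OF bspec[OF cont]]) auto
  qed
  moreover have "x \<in> N x" if x: "x \<in> topspace X" for x
    using sep[OF x] x by (simp add: N_def)
  ultimately obtain Y where Y: "finite Y" "Y \<subseteq> topspace X" "topspace X \<subseteq> (\<Union>y\<in>Y. N y)"
    using compact_space_pointwise_subcover[OF X(1), of N] by blast
  have PQ: "\<forall>y\<in>Y. P y \<subseteq> topspace X \<and> Q y \<subseteq> topspace X \<and> disjnt (X closure_of P y) (X closure_of Q y)"
  proof
    fix y assume "y \<in> Y"
    then have "y \<in> topspace X" using Y(2) by blast
    then show "P y \<subseteq> topspace X \<and> Q y \<subseteq> topspace X \<and> disjnt (X closure_of P y) (X closure_of Q y)"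
      using sep openin_subset by blast
  qed
  obtain \<W> where \<W>: "finite \<W>" "\<forall>W\<in>\<W>. openin X W" "topspace X \<subseteq> \<Union>\<W>"
    "\<forall>W\<in>\<W>. \<forall>y\<in>Y. disjnt W (P y) \<or> disjnt W (Q y)"
    using cover_avoiding_closures[OF Y(1) PQ] by blast
  have "finite (g ` Y)" "g ` Y \<subseteq> G" using Y(1,2) sep by auto
  then have "\<exists>x\<in>topspace X. \<exists>W\<in>\<W>. x \<in> W \<and> (\<forall>h\<in>g ` Y. act h x \<in> W)"
    using stable[unfolded cover_stable_def, rule_format, of \<W> "g ` Y"] \<W>(1-3) by blast
  then obtain x W where x: "x \<in> topspace X" and W: "W \<in> \<W>" "x \<in> W" "\<forall>y\<in>Y. act (g y) x \<in> W"
    by blast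
  obtain y where y: "y \<in> Y" "x \<in> N y" using Y(3) x by blast
  then have "x \<in> P y" "act (g y) x \<in> Q y" unfolding N_def by auto
  then show False using \<W>(4) W y(1) unfolding disjnt_def by blast
qed

section \<open>Continuous actions of the automorphism group\<close>

lemma topspace_aut_topology: "topspace (aut_topology D) = Aut D"
proof -
  have "Aut D \<subseteq> (\<Pi>\<^sub>E x\<in>D. D)" using Aut_mem Aut_extensional by (auto simp: PiE_def)
  then show ?thesis unfolding aut_topology_def by auto
qed

definition pointwise_stabilizer ::
  "('n \<Rightarrow> rat) set \<Rightarrow> ('n \<Rightarrow> rat) set \<Rightarrow> (('n \<Rightarrow> rat) \<Rightarrow> ('n \<Rightarrow> rat)) set" where
  "pointwise_stabilizer D A = {v \<in> Aut D. \<forall>a\<in>A. v a = a}"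

lemma aut_topology_nhd_id_contains_stabilizer:
  assumes "openin (aut_topology D) U" "restrict id D \<in> U"
  obtains A where "finite A" "A \<subseteq> D" "pointwise_stabilizer D A \<subseteq> U"
proof -
  obtain U' where U': "openin (product_topology (\<lambda>_. discrete_topology D) D) U'" "U = U' \<inter> Aut D"
    using assms(1) unfolding aut_topology_def openin_subtopology by blast
  then obtain V where V: "finite {x \<in> D. V x \<noteq> D}" "restrict id D \<in> Pi\<^sub>E D V" "Pi\<^sub>E D V \<subseteq> U'"
    using assms(2) unfolding openin_product_topology_alt by force
  define A where "A = {x \<in> D. V x \<noteq> D}"
  have "pointwise_stabilizer D A \<subseteq> U"
  proof
    fix v assume v: "v \<in> pointwise_stabilizer D A"
    then have vA: "v \<in> Aut D" "\<forall>a\<in>A. v a = a" unfolding pointwise_stabilizer_def by auto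
    have "v x \<in> V x" if "x \<in> D" for x
    proof (cases "x \<in> A")
      case True
      then show ?thesis using vA(2) V(2) that by (metis PiE_mem restrict_apply' id_apply)
    next
      case False
      then show ?thesis using Aut_mem[OF vA(1) that] that unfolding A_def by auto
    qed
    then have "v \<in> Pi\<^sub>E D V" using Aut_extensional[OF vA(1)] by (auto simp: PiE_def)
    then show "v \<in> U" using V(3) U'(2) vA(1) by blast
  qed
  then show ?thesis using that V(1) unfolding A_def by blast
qed

lemma continuous_aut_action_compose:
  "continuous_aut_action D X act \<Longrightarrow> g \<in> Aut D \<Longrightarrow> h \<in> Aut D \<Longrightarrow> x \<in> topspace X
    \<Longrightarrow> act (compose D g h) x = act g (act h x)"
  unfolding continuous_aut_action_def by blast

lemma continuous_aut_action_id:
  "continuous_aut_action D X act \<Longrightarrow> x \<in> topspace X \<Longrightarrow> act (restrict id D) x = x"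
  unfolding continuous_aut_action_def by blast

lemma continuous_map_aut_action:
  assumes "continuous_aut_action D X act" "g \<in> Aut D"
  shows "continuous_map X X (act g)"
proof -
  have "continuous_map X (prod_topology (aut_topology D) X) (\<lambda>x. (g, x))"
    using assms(2) by (intro continuous_map_pairedI) (auto simp: topspace_aut_topology)
  moreover have "continuous_map (prod_topology (aut_topology D) X) X (\<lambda>(g, x). act g x)"
    using assms(1) unfolding continuous_aut_action_def by blast
  ultimately have "continuous_map X X ((\<lambda>(g, x). act g x) \<circ> (\<lambda>x. (g, x)))"
    by (rule continuous_map_compose)
  then show ?thesis by (simp add: o_def)
qed

lemma continuous_aut_action_in_topspace:
  assumes "continuous_aut_action D X act" "g \<in> Aut D" "x \<in> topspace X"
  shows "act g x \<in> topspace X"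
  using continuous_map_aut_action[OF assms(1,2)] assms(3) unfolding continuous_map_def by blast

lemma continuous_aut_action_stabilizer_nhd:
  assumes act: "continuous_aut_action D X act" and W: "openin X W" "y \<in> W"
  obtains A V where "finite A" "A \<subseteq> D" "openin X V" "y \<in> V"
    "\<And>v z. v \<in> pointwise_stabilizer D A \<Longrightarrow> z \<in> V \<Longrightarrow> act v z \<in> W"
proof -
  let ?P = "{p \<in> topspace (prod_topology (aut_topology D) X). (\<lambda>(g, x). act g x) p \<in> W}"
  have "continuous_map (prod_topology (aut_topology D) X) X (\<lambda>(g, x). act g x)"
    using act unfolding continuous_aut_action_def by blast
  then have P_open: "openin (prod_topology (aut_topology D) X) ?P"
    using W(1) by (rule openin_continuous_map_preimage)
  have id_P: "(restrict id D, y) \<in> ?P"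
  proof -
    have "y \<in> topspace X" using W openin_subset by blast
    then show ?thesis
      by (simp add: topspace_aut_topology id_Aut continuous_aut_action_id[OF act] W(2))
  qed
  obtain U V where UV: "openin (aut_topology D) U" "openin X V"
      "restrict id D \<in> U" "y \<in> V" "U \<times> V \<subseteq> ?P"
    using P_open[unfolded openin_prod_topology_alt, rule_format, OF id_P] by blast
  obtain A where A: "finite A" "A \<subseteq> D" "pointwise_stabilizer D A \<subseteq> U"
    using aut_topology_nhd_id_contains_stabilizer[OF UV(1,3)] .
  have "act v z \<in> W" if vz: "v \<in> pointwise_stabilizer D A" "z \<in> V" for v z
  proof -
    have "(v, z) \<in> ?P" using vz A(3) UV(5) by blast
    then show ?thesis by simp
  qed
  with A(1,2) UV(2,4) show ?thesis by (rule that)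
qed

lemma continuous_aut_action_uniform_stabilizer:
  assumes act: "continuous_aut_action D X act" and X: "compact_space X"
    and \<W>: "\<And>W. W \<in> \<W> \<Longrightarrow> openin X W" "topspace X \<subseteq> \<Union>\<W>"
  obtains A where "finite A" "A \<subseteq> D"
    "\<And>y. y \<in> topspace X \<Longrightarrow> \<exists>W\<in>\<W>. \<forall>v\<in>pointwise_stabilizer D A. act v y \<in> W"
proof -
  have "\<exists>W A V. W \<in> \<W> \<and> finite A \<and> A \<subseteq> D \<and> openin X V \<and> y \<in> V \<and>
      (\<forall>v\<in>pointwise_stabilizer D A. \<forall>z\<in>V. act v z \<in> W)" if y: "y \<in> topspace X" for y
  proof -
    obtain W where W: "W \<in> \<W>" "y \<in> W" using \<W>(2) y by blast
    obtain A V where "finite A" "A \<subseteq> D" "openin X V" "y \<in> V"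
      "\<And>v z. v \<in> pointwise_stabilizer D A \<Longrightarrow> z \<in> V \<Longrightarrow> act v z \<in> W"
      using continuous_aut_action_stabilizer_nhd[OF act \<W>(1)[OF W(1)] W(2)] by blast
    then show ?thesis using W(1) by blast
  qed
  then obtain Wf Af Vf where f: "\<And>y. y \<in> topspace X \<Longrightarrow> Wf y \<in> \<W> \<and> finite (Af y) \<and> Af y \<subseteq> D \<and>
      openin X (Vf y) \<and> y \<in> Vf y \<and> (\<forall>v\<in>pointwise_stabilizer D (Af y). \<forall>z\<in>Vf y. act v z \<in> Wf y)"
    by metis
  obtain Y where Y: "finite Y" "Y \<subseteq> topspace X" "topspace X \<subseteq> (\<Union>y\<in>Y. Vf y)"
    using compact_space_pointwise_subcover[OF X, of Vf] f by blast
  define A where "A = (\<Union>y\<in>Y. Af y)"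
  have "\<exists>W\<in>\<W>. \<forall>v\<in>pointwise_stabilizer D A. act v z \<in> W" if z: "z \<in> topspace X" for z
  proof -
    obtain y where y: "y \<in> Y" "z \<in> Vf y" using Y(3) z by blast
    then have "pointwise_stabilizer D A \<subseteq> pointwise_stabilizer D (Af y)"
      unfolding A_def pointwise_stabilizer_def by blast
    then show ?thesis using f y Y(2) by blast
  qed
  moreover have "finite A" "A \<subseteq> D" unfolding A_def using Y(1,2) f by (auto simp: subset_iff)
  ultimately show ?thesis using that by blast
qed

lemma continuous_aut_action_colouring:
  assumes act: "continuous_aut_action D X act" and x0: "x0 \<in> topspace X" and \<W>: "\<W> \<noteq> {}"
    and A: "\<And>y. y \<in> topspace X \<Longrightarrow> \<exists>W\<in>\<W>. \<forall>v\<in>pointwise_stabilizer D A. act v y \<in> W"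
  obtains col where "\<And>e. col e \<in> \<W>"
    "\<And>e h. h \<in> Aut D \<Longrightarrow> \<forall>a\<in>A. e a \<in> D \<and> h (e a) = a \<Longrightarrow> act h x0 \<in> col e"
proof -
  have "\<exists>W\<in>\<W>. \<forall>h\<in>Aut D. (\<forall>a\<in>A. e a \<in> D \<and> h (e a) = a) \<longrightarrow> act h x0 \<in> W" for e
  proof (cases "\<exists>h0\<in>Aut D. \<forall>a\<in>A. e a \<in> D \<and> h0 (e a) = a")
    case True
    then obtain h0 where h0: "h0 \<in> Aut D" "\<forall>a\<in>A. e a \<in> D \<and> h0 (e a) = a" by blast
    obtain W where W: "W \<in> \<W>" "\<forall>v\<in>pointwise_stabilizer D A. act v (act h0 x0) \<in> W"
      using A continuous_aut_action_in_topspace[OF act h0(1) x0] by blast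
    have "act h x0 \<in> W" if h: "h \<in> Aut D" "\<forall>a\<in>A. e a \<in> D \<and> h (e a) = a" for h
    proof -
      \<comment> \<open>h and h0 both invert e on A, so they differ by an element of the stabiliser.\<close>
      define v where "v = compose D h (Aut_inv D h0)"
      have "v \<in> pointwise_stabilizer D A"
        unfolding pointwise_stabilizer_def
      proof (intro CollectI conjI ballI)
        show "v \<in> Aut D" unfolding v_def using compose_Aut[OF h(1) Aut_inv_Aut[OF h0(1)]] .
        fix a assume a: "a \<in> A"
        have "a = h0 (e a)" "e a \<in> D" using h0(2) a by auto
        then have "Aut_inv D h0 a = e a" "a \<in> D" using Aut_inv_left[OF h0(1)] Aut_mem[OF h0(1)] by metis+
        then show "v a = a" unfolding v_def compose_def using h(2) a by simp
      qed
      then have "act v (act h0 x0) \<in> W" using W(2) by blast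
      moreover have "act v (act h0 x0) = act h x0"
        using continuous_aut_action_compose[OF act _ h0(1) x0, of v] compose_Aut_inv_cancel[OF h(1) h0(1)]
          \<open>v \<in> pointwise_stabilizer D A\<close> unfolding v_def pointwise_stabilizer_def by simp
      ultimately show ?thesis by simp
    qed
    then show ?thesis using W(1) by blast
  qed (use \<W> in blast)
  then obtain col where "\<And>e. col e \<in> \<W> \<and> (\<forall>h\<in>Aut D. (\<forall>a\<in>A. e a \<in> D \<and> h (e a) = a) \<longrightarrow> act h x0 \<in> col e)"
    by metis
  then show ?thesis using that by blast
qed

lemma Aut_inv_images:
  assumes \<Gamma>: "finite \<Gamma>" "\<Gamma> \<subseteq> Aut D" "restrict id D \<in> \<Gamma>" and A: "finite A" "A \<subseteq> D"
  shows "finite (\<Union>g\<in>\<Gamma>. Aut_inv D g ` A)" "A \<subseteq> (\<Union>g\<in>\<Gamma>. Aut_inv D g ` A)"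
    "(\<Union>g\<in>\<Gamma>. Aut_inv D g ` A) \<subseteq> D"
proof -
  show "finite (\<Union>g\<in>\<Gamma>. Aut_inv D g ` A)" using \<Gamma>(1) A(1) by simp
  show "A \<subseteq> (\<Union>g\<in>\<Gamma>. Aut_inv D g ` A)"
  proof
    fix a assume a: "a \<in> A"
    have "Aut_inv D (restrict id D) a = a" using a A(2) by (blast intro: Aut_inv_id)
    then have "a \<in> Aut_inv D (restrict id D) ` A" using rev_image_eqI[OF a] by metis
    then show "a \<in> (\<Union>g\<in>\<Gamma>. Aut_inv D g ` A)" using \<Gamma>(3) by blast
  qed
  show "(\<Union>g\<in>\<Gamma>. Aut_inv D g ` A) \<subseteq> D"
  proof clarify
    fix g a assume "g \<in> \<Gamma>" "a \<in> A"
    then show "Aut_inv D g a \<in> D" using Aut_inv_mem \<Gamma>(2) A(2) by blast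
  qed
qed

lemma Aut_action_monochromatic_point:
  fixes D :: "('n::finite \<Rightarrow> rat) set"
  assumes dense: "dense_Qn D" and ncc: "no_common_coord D" and act: "continuous_aut_action D X act"
    and x0: "x0 \<in> topspace X" and \<W>: "finite \<W>" and A: "finite A" "A \<subseteq> D"
    and col: "\<And>e. col e \<in> \<W>"
      "\<And>e h. h \<in> Aut D \<Longrightarrow> \<forall>a\<in>A. e a \<in> D \<and> h (e a) = a \<Longrightarrow> act h x0 \<in> col e"
    and \<Gamma>: "finite \<Gamma>" "\<Gamma> \<subseteq> Aut D" "restrict id D \<in> \<Gamma>"
  obtains x W where "x \<in> topspace X" "W \<in> \<W>" "\<forall>g\<in>\<Gamma>. act g x \<in> W"
proof -
  define B where "B = (\<Union>g\<in>\<Gamma>. Aut_inv D g ` A)"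
  have B: "finite B" "A \<subseteq> B" "B \<subseteq> D" unfolding B_def using Aut_inv_images[OF \<Gamma> A] by auto
  obtain \<phi> t where \<phi>: "coord_embedding B D \<phi>" and t: "t \<in> \<W>"
    and mono: "\<And>e. coord_embedding A B e \<Longrightarrow> col (restrict (\<phi> \<circ> e) A) = t"
    using ramsey_property[where c = col, OF dense ncc B \<W> col(1)] by blast
  obtain k where k: "k \<in> Aut D" "\<And>y. y \<in> B \<Longrightarrow> k y = \<phi> y"
    using coord_embedding_extends_to_Aut[OF dense ncc B(1,3) \<phi>] by blast
  \<comment> \<open>For g \<in> \<Gamma>, the automorphism g \<circ> k\<inverse> inverts \<phi> \<circ> g\<inverse> on A, so act g x lies in the colour t.\<close>
  define x where "x = act (Aut_inv D k) x0"
  have x: "x \<in> topspace X"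
    unfolding x_def using continuous_aut_action_in_topspace[OF act Aut_inv_Aut[OF k(1)] x0] .
  have "act g x \<in> t" if g: "g \<in> \<Gamma>" for g
  proof -
    have gA: "g \<in> Aut D" using g \<Gamma>(2) by blast
    have gB: "Aut_inv D g a \<in> B" if "a \<in> A" for a unfolding B_def using g that by blast
    have "coord_embedding A B (Aut_inv D g)"
      using gB Aut_coord_embedding[OF Aut_inv_Aut[OF gA]] A(2) unfolding coord_embedding_def by blast
    then have colour: "col (restrict (\<phi> \<circ> Aut_inv D g) A) = t" by (rule mono)
    have "\<forall>a\<in>A. restrict (\<phi> \<circ> Aut_inv D g) A a \<in> D \<and>
        compose D g (Aut_inv D k) (restrict (\<phi> \<circ> Aut_inv D g) A a) = a"
    proof
      fix a assume a: "a \<in> A"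
      then have "restrict (\<phi> \<circ> Aut_inv D g) A a = k (Aut_inv D g a)" using k(2)[OF gB] by simp
      then show "restrict (\<phi> \<circ> Aut_inv D g) A a \<in> D \<and>
          compose D g (Aut_inv D k) (restrict (\<phi> \<circ> Aut_inv D g) A a) = a"
        using Aut_mem[OF k(1)] Aut_inv_mem[OF gA] compose_Aut_inv_apply[OF gA k(1)] a A(2) by auto
    qed
    then have "act (compose D g (Aut_inv D k)) x0 \<in> col (restrict (\<phi> \<circ> Aut_inv D g) A)"
      by (rule col(2)[OF compose_Aut[OF gA Aut_inv_Aut[OF k(1)]]])
    then have "act (compose D g (Aut_inv D k)) x0 \<in> t" unfolding colour .
    then show ?thesis
      unfolding x_def using continuous_aut_action_compose[OF act gA Aut_inv_Aut[OF k(1)] x0] by simp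
  qed
  then show ?thesis using that x t by blast
qed

lemma Aut_action_cover_stable:
  fixes D :: "('n::finite \<Rightarrow> rat) set"
  assumes dense: "dense_Qn D" and ncc: "no_common_coord D"
    and act: "continuous_aut_action D X act" and X: "compact_space X" "topspace X \<noteq> {}"
  shows "cover_stable X act (Aut D)"
  unfolding cover_stable_def
proof (intro allI impI, elim conjE)
  fix \<W> \<Gamma> assume \<W>: "finite \<W>" "\<forall>W\<in>\<W>. openin X W" "topspace X \<subseteq> \<Union>\<W>"
    and \<Gamma>: "finite \<Gamma>" "\<Gamma> \<subseteq> Aut D"
  obtain x0 where x0: "x0 \<in> topspace X" using X(2) by blast
  have "\<W> \<noteq> {}" using \<W>(3) x0 by blast
  obtain A where A: "finite A" "A \<subseteq> D"
    "\<And>y. y \<in> topspace X \<Longrightarrow> \<exists>W\<in>\<W>. \<forall>v\<in>pointwise_stabilizer D A. act v y \<in> W"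
    using continuous_aut_action_uniform_stabilizer[OF act X(1)] \<W>(2,3) by blast
  obtain col where col: "\<And>e. col e \<in> \<W>"
    "\<And>e h. h \<in> Aut D \<Longrightarrow> \<forall>a\<in>A. e a \<in> D \<and> h (e a) = a \<Longrightarrow> act h x0 \<in> col e"
    using continuous_aut_action_colouring[OF act x0 \<open>\<W> \<noteq> {}\<close> A(3)] by blast
  have \<Gamma>': "finite (insert (restrict id D) \<Gamma>)" "insert (restrict id D) \<Gamma> \<subseteq> Aut D"
    "restrict id D \<in> insert (restrict id D) \<Gamma>"
    using \<Gamma> id_Aut by auto
  obtain x W where x: "x \<in> topspace X" "W \<in> \<W>" "\<forall>g\<in>insert (restrict id D) \<Gamma>. act g x \<in> W"
    using Aut_action_monochromatic_point[where col = col, OF dense ncc act x0 \<W>(1) A(1,2) col \<Gamma>'] by blast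
  moreover have "x \<in> W" using x(3) continuous_aut_action_id[OF act x(1)] by simp
  ultimately show "\<exists>x\<in>topspace X. \<exists>W\<in>\<W>. x \<in> W \<and> (\<forall>g\<in>\<Gamma>. act g x \<in> W)" by blast
qed

theorem corollary5p6:
  fixes D :: "('n::finite \<Rightarrow> rat) set"
  assumes "CARD('n) \<ge> 2"
    and "dense_Qn D"
    and "no_common_coord D"
  shows "\<forall>(X :: 'b topology) act.
           compact_space X \<and> Hausdorff_space X \<and> topspace X \<noteq> {} \<and> continuous_aut_action D X act
           \<longrightarrow> (\<exists>x\<in>topspace X. \<forall>g\<in>Aut D. act g x = x)"
proof (intro allI impI, elim conjE)
  fix X :: "'b topology" and act
  assume X: "compact_space X" "Hausdorff_space X" "topspace X \<noteq> {}"
    and act: "continuous_aut_action D X act"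
  have "\<forall>g\<in>Aut D. continuous_map X X (act g)" using continuous_map_aut_action[OF act] by blast
  moreover have "cover_stable X act (Aut D)"
    using Aut_action_cover_stable[OF assms(2,3) act X(1,3)] .
  ultimately show "\<exists>x\<in>topspace X. \<forall>g\<in>Aut D. act g x = x"
    by (rule common_fixed_point_if_cover_stable[OF X(1,2)])
qed

end
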